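(* For every prime power $q$ and every $G\in\mathfrak{g}_3(\mathbb{F}_q)$, $G$ has exactly $q+1$ nonlooped vertices, and each nonlooped vertex of $G$ is adjacent to exactly $q$ nonlooped vertices and exactly $q^2-q$ looped vertices.
   Context: For a symmetric $n\times n$ matrix $A$, the looped graph corresponding to $A$, $\Gamma(A)$, has vertex set $\{1,\dots,n\}$, an edge $ij$ ($i\neq j$) iff $a_{ij}\neq0$, and a loop at $i$ iff $a_{ii}\ne 0$. Definition of $\mathfrak{g}_k(\mathbb{F}_q)$: let $x_1,\dots,x_m$ be representatives of the classes of nonzero vectors of $\mathbb{F}_q^k$ under the relation $x\sim cx$ ($c\in\mathbb{F}_q$, $c\neq0$), and let $U=[x_1\ \cdots\ x_m]$; $\mathfrak{g}_k(\mathbb{F}_q)$ is the set of isomorphism classes of looped graphs $\Gamma(U^tBU)$ as $B$ ranges over the invertible symmetric $k\times k$ matrices over $\mathbb{F}_q$. *)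

theory Defs
  imports "HOL-Analysis.Analysis"
begin

definition proj_equiv :: "'a::field ^ 'n \<Rightarrow> 'a ^ 'n \<Rightarrow> bool" where
  "proj_equiv x y \<longleftrightarrow> (\<exists>c. c \<noteq> 0 \<and> x = c *s y)"

text \<open>The list xs = [x_1, ..., x_m] (the columns of U) is a system of representatives
  of the classes of nonzero vectors under proj_equiv: every entry is nonzero and every
  nonzero vector is equivalent to exactly one entry (position).\<close>
definition proj_reps :: "('a::field ^ 'n) list \<Rightarrow> bool" where
  "proj_reps xs \<longleftrightarrow> (\<forall>i<length xs. xs ! i \<noteq> 0) \<and>
     (\<forall>x. x \<noteq> 0 \<longrightarrow> (\<exists>!i. i < length xs \<and> proj_equiv x (xs ! i)))"

text \<open>Entry (i,j) of U^t B U, i.e. x_i^t B x_j.\<close>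
definition gram_entry :: "('a::field ^ 'n) list \<Rightarrow> 'a ^ 'n ^ 'n \<Rightarrow> nat \<Rightarrow> nat \<Rightarrow> 'a" where
  "gram_entry xs B i j = (\<Sum>k\<in>UNIV. (xs ! i) $ k * (B *v (xs ! j)) $ k)"

text \<open>The looped graph Gamma(A) of a symmetric m x m matrix A (given by its entries),
  vertex set {0..<m}: edge ij (i \<noteq> j) iff a_ij \<noteq> 0, loop at i iff a_ii \<noteq> 0.\<close>
definition lg_edge :: "(nat \<Rightarrow> nat \<Rightarrow> 'a::zero) \<Rightarrow> nat \<Rightarrow> nat \<Rightarrow> bool" where
  "lg_edge A i j \<longleftrightarrow> i \<noteq> j \<and> A i j \<noteq> 0"

definition lg_loop :: "(nat \<Rightarrow> nat \<Rightarrow> 'a::zero) \<Rightarrow> nat \<Rightarrow> bool" where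
  "lg_loop A i \<longleftrightarrow> A i i \<noteq> 0"

end

theory Submission
  imports Defs
begin

(* Let Q(y) = y^t B y be the quadratic form of the invertible symmetric 3 x 3 matrix B
   over F_q.  Vertex i of the looped graph is nonlooped iff the representative x_i is
   isotropic (Q(x_i) = 0), so the nonlooped vertices are the points of the conic Q = 0
   in the projective plane, and i ~ j iff x_i^t B x_j <> 0.

   Then
   it counts vectors in F_q^3: level sets of nonzero linear functionals have q^2
   elements; isotropic vectors orthogonal to an isotropic x are the q multiples of x
   (tangent line); and the isotropic cone has exactly q^2 elements.  The latter uses a
   nontrivial zero of Q (completing squares plus pigeonhole on squares) in odd
   characteristic, and the fact that Q is the square of a linear form in
   characteristic 2.  Dividing these vector counts by q - 1 gives the q + 1 points of
   the conic and, for a point x of the conic, the q isotropic and q^2 - q anisotropic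
   points not orthogonal to x, which is the theorem. *)

definition bform :: "'a::field^'n^'n \<Rightarrow> 'a^'n \<Rightarrow> 'a^'n \<Rightarrow> 'a" where
  "bform B u v = (\<Sum>k\<in>UNIV. u$k * (B *v v)$k)"

lemma gram_entry_bform: "gram_entry xs B i j = bform B (xs ! i) (xs ! j)"
  by (simp add: gram_entry_def bform_def)

lemma bform_expand: "bform B u v = (\<Sum>k\<in>UNIV. \<Sum>l\<in>UNIV. u$k * B$k$l * v$l)"
  by (simp add: bform_def matrix_vector_mult_def sum_distrib_left mult.assoc)

lemma bform_add_left: "bform B (u + w) v = bform B u v + bform B w v"
  by (simp add: bform_def distrib_right sum.distrib)

lemma bform_add_right: "bform B u (v + w) = bform B u v + bform B u w"
  by (simp add: bform_expand distrib_left distrib_right sum.distrib)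

lemma bform_smult_left: "bform B (c *s u) v = c * bform B u v"
  by (simp add: bform_def sum_distrib_left mult.assoc)

lemma bform_smult_right: "bform B u (c *s v) = c * bform B u v"
  by (simp add: bform_expand sum_distrib_left algebra_simps)

lemma symmetric_entry: "transpose B = B \<Longrightarrow> B$k$l = B$l$k"
  by (metis transpose_def vec_lambda_beta)

lemma bform_sym:
  assumes "transpose B = B" shows "bform B u v = bform B v u"
  unfolding bform_expand using symmetric_entry[OF assms]
  by (subst sum.swap) (simp add: ac_simps)

lemma quad_smult: "bform B (c *s y) (c *s y) = c^2 * bform B y y"
  by (simp add: bform_smult_left bform_smult_right power2_eq_square)

lemma quad_shift:
  assumes "transpose B = B"
  shows "bform B (y + s *s x) (y + s *s x) = bform B y y + 2 * s * bform B x y + s^2 * bform B x x"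
  using bform_sym[OF assms, of y x]
  by (simp add: bform_add_left bform_add_right bform_smult_left bform_smult_right
      power2_eq_square algebra_simps)

lemma bform_axis_left: "bform B (axis k 1) v = (B *v v) $ k"
  by (simp add: bform_def axis_def of_bool_def[symmetric])

lemma bform_nondegenerate:
  assumes sym: "transpose B = B" and inv: "invertible B" and x: "x \<noteq> 0"
  shows "\<exists>u. bform B x u \<noteq> 0"
proof -
  obtain B' where B': "B' ** B = mat 1" using inv unfolding invertible_def by blast
  have "B' *v (B *v x) = x" by (simp add: matrix_vector_mul_assoc B')
  then have "B *v x \<noteq> 0" using x by auto
  then obtain k where k: "(B *v x) $ k \<noteq> 0" by (auto simp: vec_eq_iff)
  then show ?thesis using bform_axis_left[of B k x] bform_sym[OF sym] by metis
qed

lemma card_field_ge_2: "CARD('a::{field,finite}) \<ge> 2"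
proof -
  have "card {0::'a, 1} \<le> CARD('a)" by (rule card_mono) auto
  then show ?thesis by simp
qed

lemma smult_nonzero: "c \<noteq> 0 \<Longrightarrow> (v::'a::field^'n) \<noteq> 0 \<Longrightarrow> c *s v \<noteq> 0"
  by (auto simp: vec_eq_iff)

lemma card_multiples:
  assumes "(v::'a::field^'n) \<noteq> 0"
  shows "card ((\<lambda>c. c *s v) ` A) = card A"
  using assms by (intro card_image inj_onI) (auto simp: vec_eq_iff)

text \<open>Counting through projective representatives: a scale-invariant property P holds
  for q - 1 times as many nonzero vectors as representatives, since each
  projective point contributes exactly its q - 1 nonzero multiples.\<close>
lemma card_nonzero_via_reps:
  fixes xs :: "('a::{field,finite}^'n) list"
  assumes pr: "proj_reps xs" and inv: "\<And>c x. c \<noteq> 0 \<Longrightarrow> P (c *s x) = P x"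
  shows "card {x. x \<noteq> 0 \<and> P x} = (CARD('a) - 1) * card {i. i < length xs \<and> P (xs!i)}"
proof -
  let ?I = "{i. i < length xs \<and> P (xs!i)}"
  define cls where "cls i = (\<lambda>c. c *s (xs!i)) ` (UNIV - {0})" for i
  have nz: "i < length xs \<Longrightarrow> xs!i \<noteq> 0" for i using pr unfolding proj_reps_def by blast
  have uq: "x \<noteq> 0 \<Longrightarrow> \<exists>!i. i < length xs \<and> proj_equiv x (xs ! i)" for x
    using pr unfolding proj_reps_def by blast
  have cls_iff: "x \<in> cls i \<longleftrightarrow> x \<noteq> 0 \<and> proj_equiv x (xs ! i)" if "i < length xs" for i x
    using nz[OF that] smult_nonzero unfolding cls_def proj_equiv_def by auto
  have union: "{x. x \<noteq> 0 \<and> P x} = (\<Union>i\<in>?I. cls i)"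
  proof (intro equalityI subsetI)
    fix x assume "x \<in> {x. x \<noteq> 0 \<and> P x}"
    then have x: "x \<noteq> 0" "P x" by auto
    obtain i where i: "i < length xs" "proj_equiv x (xs!i)" using uq[OF x(1)] by blast
    then obtain c where "c \<noteq> 0" "x = c *s xs!i" unfolding proj_equiv_def by blast
    then have "P (xs!i)" using inv x by simp
    then show "x \<in> (\<Union>i\<in>?I. cls i)" using i x cls_iff by auto
  next
    fix x assume "x \<in> (\<Union>i\<in>?I. cls i)"
    then obtain i c where "i < length xs" "P (xs!i)" "c \<noteq> 0" "x = c *s xs!i"
      unfolding cls_def by auto
    then show "x \<in> {x. x \<noteq> 0 \<and> P x}" using inv nz smult_nonzero by auto
  qed
  have disjoint: "cls i \<inter> cls j = {}" if "i \<in> ?I" "j \<in> ?I" "i \<noteq> j" for i j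
  proof -
    have "x \<notin> cls j" if "x \<in> cls i" for x
      using that \<open>i \<in> ?I\<close> \<open>j \<in> ?I\<close> \<open>i \<noteq> j\<close> uq cls_iff by blast
    then show ?thesis by blast
  qed
  have card_cls: "card (cls i) = CARD('a) - 1" if "i \<in> ?I" for i
    using that nz card_multiples[of "xs!i" "UNIV - {0}"] by (simp add: cls_def)
  have "card (\<Union>i\<in>?I. cls i) = (\<Sum>i\<in>?I. card (cls i))"
  proof (rule card_UN_disjoint)
    show "\<forall>i\<in>?I. \<forall>j\<in>?I. i \<noteq> j \<longrightarrow> cls i \<inter> cls j = {}" using disjoint by blast
  qed simp_all
  then show ?thesis using union card_cls by simp
qed

lemma card_reps_via_nonzero:
  fixes xs :: "('a::{field,finite}^'n) list"
  assumes pr: "proj_reps xs" and inv: "\<And>c x. c \<noteq> 0 \<Longrightarrow> P (c *s x) = P x"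
    and count: "card {x. x \<noteq> 0 \<and> P x} = (CARD('a) - 1) * m"
  shows "card {i. i < length xs \<and> P (xs!i)} = m"
  using card_nonzero_via_reps[OF pr inv] count card_field_ge_2[where 'a='a] by simp

text \<open>Every level set of a nonzero linear functional on the n-dimensional space has
  q^(n-1) elements: all level sets are translates of the kernel, and they partition the space.\<close>
lemma card_level_set_linear:
  fixes l :: "'a::{field,finite}^'n \<Rightarrow> 'a"
  assumes add: "\<And>u v. l (u + v) = l u + l v" and hom: "\<And>c u. l (c *s u) = c * l u"
    and nz: "l u0 \<noteq> 0"
  shows "CARD('a) * card {y. l y = c} = CARD('a) ^ CARD('n)"
proof -
  have level_eq: "card {y. l y = c} = card {y. l y = 0}" for c
  proof -
    define t where "t = (c / l u0) *s u0"
    have lt: "l t = c" using nz by (simp add: t_def hom)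
    have "(\<lambda>y. y + t) ` {y. l y = 0} = {y. l y = c}"
    proof (intro equalityI subsetI)
      fix y assume "y \<in> {y. l y = c}"
      then have "y - t \<in> {y. l y = 0}" using add[of "y - t" t] lt by simp
      then show "y \<in> (\<lambda>y. y + t) ` {y. l y = 0}" by (rule rev_image_eqI) simp
    qed (auto simp: add lt)
    moreover have "inj_on (\<lambda>y. y + t) {y. l y = 0}" by (auto intro: inj_onI)
    ultimately show ?thesis by (metis card_image)
  qed
  have "(UNIV :: ('a^'n) set) = (\<Union>c\<in>UNIV. {y. l y = c})" by auto
  then have "CARD('a) ^ CARD('n) = card (\<Union>c\<in>UNIV. {y. l y = c})" by (metis CARD_vec)
  also have "\<dots> = (\<Sum>c\<in>UNIV. card {y. l y = c})"
    by (rule card_UN_disjoint) auto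
  also have "\<dots> = (\<Sum>c'\<in>(UNIV::'a set). card {y. l y = 0})" by (intro sum.cong refl level_eq)
  also have "\<dots> = CARD('a) * card {y. l y = c}" using level_eq[of c] by simp
  finally show ?thesis by simp
qed

lemma card_level_set_linear_3:
  fixes l :: "'a::{field,finite}^3 \<Rightarrow> 'a"
  assumes add: "\<And>u v. l (u + v) = l u + l v" and hom: "\<And>c u. l (c *s u) = c * l u"
    and nz: "l u0 \<noteq> 0"
  shows "card {y. l y = c} = CARD('a)^2"
proof -
  have "CARD('a) * card {y. l y = c} = CARD('a) * CARD('a)^2"
    using card_level_set_linear[OF add hom nz] by (simp add: power_numeral_reduce)
  then show ?thesis by simp
qed

lemma card_bform_level:
  fixes B :: "'a::{field,finite}^3^3"
  assumes sym: "transpose B = B" and inv: "invertible B" and x: "x \<noteq> 0"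
  shows "card {y. bform B x y = c} = CARD('a)^2"
proof -
  obtain u0 where "bform B x u0 \<noteq> 0" using bform_nondegenerate[OF sym inv x] by blast
  then show ?thesis
    by (intro card_level_set_linear_3) (simp_all add: bform_add_right bform_smult_right)
qed

lemma gram_matrix_entry: "((R ** B) ** transpose R) $ i $ j = bform B (R$i) (R$j)"
  unfolding matrix_matrix_mult_def transpose_def bform_expand
  by (simp add: sum_distrib_right) (rule sum.swap)

text \<open>The tangent line: if x and y are isotropic and orthogonal, the rows x, y, w of
  any matrix R give a Gram matrix R B R^t with a zero 2 \<times> 2 block and hence zero
  determinant; as det B \<noteq> 0, det R = 0 for all w, so all 2 \<times> 2 minors of (x, y) vanish.\<close>
lemma isotropic_orthogonal_multiple:
  fixes B :: "'a::field^3^3"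
  assumes sym: "transpose B = B" and inv: "invertible B"
    and x: "x \<noteq> 0" "bform B x x = 0" and y: "bform B y y = 0" "bform B x y = 0"
  shows "\<exists>c. y = c *s x"
proof -
  have yx: "bform B y x = 0" using y bform_sym[OF sym] by metis
  have det_zero: "det (\<chi> i. if i = 1 then x else if i = 2 then y else w) = 0" for w :: "'a^3"
  proof -
    define R :: "'a^3^3" where "R = (\<chi> i. if i = 1 then x else if i = 2 then y else w)"
    have R: "R$1 = x" "R$2 = y" "R$3 = w" by (simp_all add: R_def)
    have "det R * det B * det R = det ((R ** B) ** transpose R)" by (simp add: det_mul)
    also have "\<dots> = 0" unfolding det_3 gram_matrix_entry R using x y yx by simp
    finally show ?thesis using inv invertible_det_nz R_def by auto
  qed
  have c1: "x$1 * y$2 = x$2 * y$1" using det_zero[of "axis 3 1"] by (simp add: det_3 axis_def)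
  have c2: "x$3 * y$1 = x$1 * y$3" using det_zero[of "axis 2 1"] by (simp add: det_3 axis_def)
  have c3: "x$2 * y$3 = x$3 * y$2" using det_zero[of "axis 1 1"] by (simp add: det_3 axis_def)
  have minors: "x$k * y$j = x$j * y$k" for j k
    using exhaust_3[of j] exhaust_3[of k] c1 c2 c3 by (auto simp: ac_simps)
  obtain k where k: "x$k \<noteq> 0" using x by (auto simp: vec_eq_iff)
  have "y = (y$k / x$k) *s x"
    unfolding vec_eq_iff using minors k by (simp add: field_simps)
  then show ?thesis by blast
qed

lemma card_isotropic_orthogonal:
  fixes B :: "'a::{field,finite}^3^3"
  assumes sym: "transpose B = B" and inv: "invertible B" and x: "x \<noteq> 0" "bform B x x = 0"
  shows "card {y. bform B y y = 0 \<and> bform B x y = 0} = CARD('a)"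
proof -
  have "{y. bform B y y = 0 \<and> bform B x y = 0} = range (\<lambda>c. c *s x)"
    using isotropic_orthogonal_multiple[OF sym inv x] x
    by (auto simp: quad_smult bform_smult_left bform_smult_right)
  then show ?thesis using card_multiples[OF x(1), of UNIV] by simp
qed

lemma quad_form_3:
  fixes B :: "'a::field^3^3"
  assumes sym: "transpose B = B"
  shows "bform B x x = B$1$1*x$1^2 + B$2$2*x$2^2 + B$3$3*x$3^2
    + 2*B$1$2*x$1*x$2 + 2*B$1$3*x$1*x$3 + 2*B$2$3*x$2*x$3"
  using symmetric_entry[OF sym, of 2 1] symmetric_entry[OF sym, of 3 1]
    symmetric_entry[OF sym, of 3 2]
  by (simp add: bform_expand sum_3 power2_eq_square algebra_simps)

lemma complete_square_ternary:
  fixes a b c d e f x y z :: "'a::comm_ring_1"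
  shows "a * (a*x^2 + d*y^2 + f*z^2 + 2*b*x*y + 2*c*x*z + 2*e*y*z) =
    (a*x + b*y + c*z)^2 + (a*d - b^2)*y^2 + 2*(a*e - b*c)*y*z + (a*f - c^2)*z^2"
  by (simp add: power2_eq_square algebra_simps)

lemma complete_square_binary:
  fixes d e f y z :: "'a::comm_ring_1"
  shows "d * (d*y^2 + 2*e*y*z + f*z^2) = (d*y + e*z)^2 + (d*f - e^2)*z^2"
  by (simp add: power2_eq_square algebra_simps)

text \<open>There are at least (q + 1)/2 squares in a finite field, since every nonzero
  square has at most two square roots.\<close>
lemma card_squares_lower_bound: "CARD('a::{field,finite}) + 1 \<le> 2 * card (range (\<lambda>x::'a. x^2))"
proof -
  let ?S = "range (\<lambda>x::'a. x^2)"
  define root where "root s = {x::'a. x^2 = s}" for s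
  have zero_in: "0 \<in> ?S" by (auto intro: rev_image_eqI[of 0])
  have root_le: "card (root s) \<le> 2" if s: "s \<in> ?S - {0}" for s
  proof -
    obtain r where r: "s = r^2" using s by auto
    have "root s \<subseteq> {r, -r}" unfolding root_def r using power2_eq_iff by auto
    then have "card (root s) \<le> card {r, -r}" by (rule card_mono[rotated]) simp
    also have "\<dots> \<le> 2" by (simp add: card_insert_if)
    finally show ?thesis .
  qed
  have "CARD('a) = card (\<Union>s\<in>?S. root s)"
    by (rule arg_cong[where f = card]) (auto simp: root_def)
  also have "\<dots> = (\<Sum>s\<in>?S. card (root s))"
    by (rule card_UN_disjoint) (auto simp: root_def)
  also have "\<dots> = card (root 0) + (\<Sum>s\<in>?S - {0}. card (root s))"
    using zero_in by (intro sum.remove) simp_all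
  also have "\<dots> \<le> 1 + (\<Sum>s\<in>?S - {0}. 2)"
    using root_le sum_mono[of "?S - {0}" "\<lambda>s. card (root s)" "\<lambda>_. 2"]
    by (simp add: root_def)
  also have "\<dots> = 1 + 2 * (card ?S - 1)" using zero_in by simp
  finally show ?thesis using zero_in card_gt_0_iff[of ?S] by fastforce
qed

text \<open>Pigeonhole on squares: the sets {d X^2} and {e - Y^2} each have more than q/2
  elements, so they meet.\<close>
lemma weighted_sum_of_squares:
  fixes d e :: "'a::{field,finite}"
  assumes d: "d \<noteq> 0"
  shows "\<exists>X Y. d * X^2 + Y^2 = e"
proof -
  let ?Sq = "range (\<lambda>x::'a. x^2)"
  let ?A = "(\<lambda>s. d * s) ` ?Sq" and ?B = "(\<lambda>s. e - s) ` ?Sq"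
  have "card ?A = card ?Sq" using d by (intro card_image inj_onI) auto
  moreover have "card ?B = card ?Sq" by (intro card_image inj_onI) auto
  moreover have "card (?A \<union> ?B) \<le> CARD('a)" by (rule card_mono) auto
  ultimately have "?A \<inter> ?B \<noteq> {}"
    using card_squares_lower_bound[where 'a='a] card_Un_disjoint[of ?A ?B] by fastforce
  then obtain X Y where "d * X^2 = e - Y^2" by auto
  then show ?thesis by (metis diff_add_cancel)
qed

lemma vector_3_eq_0: "(vector [p, r, t] :: 'a::zero^3) = 0 \<longleftrightarrow> p = 0 \<and> r = 0 \<and> t = 0"
  by (simp add: vec_eq_iff forall_3)

text \<open>Every ternary quadratic form over a finite field has a nontrivial zero (the case
  of Chevalley-Warning needed here), found by completing squares twice.\<close>
lemma isotropic_vector_exists: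
  fixes B :: "'a::{field,finite}^3^3"
  assumes sym: "transpose B = B"
  shows "\<exists>x. x \<noteq> 0 \<and> bform B x x = 0"
proof -
  define a where "a = B$1$1"
  define b where "b = B$1$2"
  define c where "c = B$1$3"
  define d2 where "d2 = a * B$2$2 - b^2"
  define e2 where "e2 = a * B$2$3 - b*c"
  define f2 where "f2 = a * B$3$3 - c^2"
  have reduced: "a * bform B (vector [p, r, t]) (vector [p, r, t])
      = (a*p + b*r + c*t)^2 + d2*r^2 + 2*e2*r*t + f2*t^2" for p r t
    unfolding quad_form_3[OF sym] vector_3 a_def b_def c_def d2_def e2_def f2_def
    by (rule complete_square_ternary)
  consider "a = 0" | "a \<noteq> 0" "d2 = 0" | "a \<noteq> 0" "d2 \<noteq> 0" by blast
  then show ?thesis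
  proof cases
    case 1
    have "bform B (vector [1, 0, 0]) (vector [1, 0, 0]) = 0"
      using 1 by (simp add: quad_form_3[OF sym] a_def)
    then show ?thesis by (intro exI[of _ "vector [1, 0, 0]"]) (simp add: vector_3_eq_0)
  next
    case 2
    have "a * (-b/a) + b*1 + c*0 = 0" using 2 by simp
    then have "a * bform B (vector [-b/a, 1, 0]) (vector [-b/a, 1, 0]) = 0"
      unfolding reduced using 2 by simp
    then show ?thesis using 2 by (intro exI[of _ "vector [-b/a, 1, 0]"]) (simp add: vector_3_eq_0)
  next
    case 3
    obtain X Y where XY: "d2 * X^2 + Y^2 = -(d2*f2 - e2^2)"
      using weighted_sum_of_squares[OF 3(2)] by blast
    define r where "r = (Y - e2) / d2"
    define p where "p = (X - b*r - c) / a"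
    have p: "a*p + b*r + c*1 = X" using 3 by (simp add: p_def field_simps)
    have r: "d2*r + e2*1 = Y" using 3 by (simp add: r_def field_simps)
    have "d2 * (a * bform B (vector [p, r, 1]) (vector [p, r, 1]))
        = d2 * X^2 + d2 * (d2*r^2 + 2*e2*r*1 + f2*1^2)"
      unfolding reduced p by (simp add: algebra_simps)
    also have "\<dots> = d2 * X^2 + Y^2 + (d2*f2 - e2^2)"
      unfolding complete_square_binary r by simp
    also have "\<dots> = 0" using XY by simp
    finally have "bform B (vector [p, r, 1]) (vector [p, r, 1]) = 0" using 3 by simp
    then show ?thesis by (intro exI[of _ "vector [p, r, 1]"]) (simp add: vector_3_eq_0)
  qed
qed

text \<open>A cone (a set of vectors closed under nonzero scaling) meets the complement of
  the kernel of a homogeneous functional l in q - 1 copies of its section l = 1: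
  the map (c, z) \<mapsto> c z is a bijection onto it.\<close>
lemma card_cone_off_kernel:
  fixes l :: "'a::{field,finite}^'n \<Rightarrow> 'a"
  assumes hom: "\<And>c u. l (c *s u) = c * l u" and cone: "\<And>c y. c \<noteq> 0 \<Longrightarrow> P (c *s y) = P y"
  shows "card {y. P y \<and> l y \<noteq> 0} = (CARD('a) - 1) * card {z. P z \<and> l z = 1}"
proof -
  define S where "S = {z. P z \<and> l z = 1}"
  define G where "G = (\<lambda>(c::'a, z::'a^'n). c *s z)"
  define D where "D = (UNIV - {0::'a}) \<times> S"
  have "bij_betw G D {y. P y \<and> l y \<noteq> 0}"
  proof (rule bij_betwI')
    fix p p' assume "p \<in> D" "p' \<in> D"
    then obtain c z c' z' where p: "p = (c, z)" "p' = (c', z')" "c \<noteq> 0" "z \<in> S" "z' \<in> S"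
      unfolding D_def by auto
    show "(G p = G p') = (p = p')"
    proof
      assume eq: "G p = G p'"
      then have "c * l z = c' * l z'" using p unfolding G_def by (metis hom case_prod_conv)
      then have "c = c'" using p by (simp add: S_def)
      then show "p = p'" using eq p by (simp add: G_def vec_eq_iff)
    qed simp
  next
    fix p assume "p \<in> D"
    then show "G p \<in> {y. P y \<and> l y \<noteq> 0}" by (auto simp: G_def D_def S_def hom cone)
  next
    fix y assume y: "y \<in> {y. P y \<and> l y \<noteq> 0}"
    then have "(l y, (1 / l y) *s y) \<in> D" by (simp add: D_def S_def hom cone)
    moreover have "y = G (l y, (1 / l y) *s y)" using y by (simp add: G_def vec_eq_iff)
    ultimately show "\<exists>p\<in>D. y = G p" by blast
  qed
  then have "card {y. P y \<and> l y \<noteq> 0} = card D" by (simp add: bij_betw_same_card)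
  then show ?thesis by (simp add: D_def S_def card_cartesian_product card_Diff_subset)
qed

text \<open>Odd characteristic: for an isotropic x_0 \<noteq> 0, every point y of the affine plane
  {bform B x_0 y = 1} lies on exactly one line y + s x_0 through an isotropic point,
  because Q(z + s x_0) = Q(z) + 2s.\<close>
lemma card_conic_affine_section:
  fixes B :: "'a::{field,finite}^3^3"
  assumes sym: "transpose B = B" and inv: "invertible B" and two: "(2::'a) \<noteq> 0"
    and x0: "x0 \<noteq> 0" "bform B x0 x0 = 0"
  shows "card {z. bform B z z = 0 \<and> bform B x0 z = 1} = CARD('a)"
proof -
  define S where "S = {z. bform B z z = 0 \<and> bform B x0 z = 1}"
  have lin_shift: "bform B x0 (z + s *s x0) = bform B x0 z" for z s
    using x0 by (simp add: bform_add_right bform_smult_right)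
  have quad_shift': "bform B (z + s *s x0) (z + s *s x0) = bform B z z + 2 * s * bform B x0 z" for z s
    using quad_shift[OF sym] x0 by simp
  define F where "F = (\<lambda>(s::'a, z). z + s *s x0)"
  define T where "T = (UNIV :: 'a set) \<times> S"
  have "bij_betw F T {y. bform B x0 y = 1}"
  proof (rule bij_betwI')
    fix p p' assume "p \<in> T" "p' \<in> T"
    then obtain s z t z' where p: "p = (s, z)" "p' = (t, z')" "z \<in> S" "z' \<in> S"
      unfolding T_def by auto
    show "(F p = F p') = (p = p')"
    proof
      assume "F p = F p'"
      then have z': "z' = z + (s - t) *s x0" using p unfolding F_def by (simp add: vec_eq_iff algebra_simps)
      have "bform B z' z' = bform B z z + 2 * (s - t) * bform B x0 z" unfolding z' by (rule quad_shift')
      then have "s = t" using p two unfolding S_def by simp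
      then show "p = p'" using p z' by simp
    qed simp
  next
    fix p assume "p \<in> T"
    then show "F p \<in> {y. bform B x0 y = 1}"
      by (auto simp: S_def T_def F_def lin_shift)
  next
    fix y assume y: "y \<in> {y. bform B x0 y = 1}"
    define s where "s = bform B y y / 2"
    define z where "z = y + (- s) *s x0"
    have "bform B z z = 0"
      unfolding z_def quad_shift' using y two by (simp add: s_def)
    moreover have "bform B x0 z = 1" unfolding z_def lin_shift using y by simp
    ultimately have "(s, z) \<in> T" by (simp add: S_def T_def)
    moreover have "y = F (s, z)" by (simp add: F_def z_def vec_eq_iff)
    ultimately show "\<exists>p\<in>T. y = F p" by blast
  qed
  then have "card T = card {y. bform B x0 y = 1}" by (rule bij_betw_same_card)
  then have "CARD('a) * card S = CARD('a)^2"
    using card_bform_level[OF sym inv x0(1)] by (simp add: T_def card_cartesian_product)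
  then show ?thesis by (simp add: S_def power2_eq_square)
qed

text \<open>Odd characteristic: the isotropic cone has q^2 elements. It consists of the q
  multiples of x_0 in the tangent plane and of the (q - 1) q nonzero multiples of the
  points counted in the previous lemmas.\<close>
lemma card_conic_odd_char:
  fixes B :: "'a::{field,finite}^3^3"
  assumes sym: "transpose B = B" and inv: "invertible B" and two: "(2::'a) \<noteq> 0"
  shows "card {y. bform B y y = 0} = CARD('a)^2"
proof -
  obtain x0 where x0: "x0 \<noteq> 0" "bform B x0 x0 = 0" using isotropic_vector_exists[OF sym] by blast
  define C where "C = {y. bform B y y = 0}"
  define T where "T = {y. bform B x0 y = 0}"
  have cone: "(bform B (c *s y) (c *s y) = 0) = (bform B y y = 0)" if "c \<noteq> 0" for c y
    using that by (simp add: quad_smult)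
  have tangent: "card (C \<inter> T) = CARD('a)"
    using card_isotropic_orthogonal[OF sym inv x0] by (simp add: C_def T_def Collect_conj_eq)
  have "C - T = {y. bform B y y = 0 \<and> bform B x0 y \<noteq> 0}" by (auto simp: C_def T_def)
  then have off_tangent: "card (C - T) = (CARD('a) - 1) * CARD('a)"
    using card_cone_off_kernel[where l = "bform B x0", OF bform_smult_right cone]
      card_conic_affine_section[OF sym inv two x0]
    by simp
  have "card C = card (C \<inter> T) + card (C - T)" by (simp add: card_Int_Diff)
  also have "\<dots> = CARD('a) + (CARD('a) - 1) * CARD('a)" using tangent off_tangent by simp
  also have "\<dots> = CARD('a)^2"
    using card_field_ge_2[where 'a='a] by (simp add: power2_eq_square algebra_simps)
  finally show ?thesis by (simp add: C_def)
qed

text \<open>In characteristic 2 squaring is injective (Frobenius), hence bijective on a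
  finite field.\<close>
lemma squaring_bij_char2:
  assumes two: "(2::'a::{field,finite}) = 0"
  shows "bij (\<lambda>x::'a. x * x)"
proof -
  have "inj (\<lambda>x::'a. x * x)"
  proof (rule injI)
    fix x y :: 'a assume sq: "x * x = y * y"
    have "(x - y) * (x - y) = x * x - y * y + 2 * (y * y - x * y)" by (simp add: algebra_simps)
    then have "(x - y) * (x - y) = 0" using sq two by simp
    then show "x = y" by simp
  qed
  then show ?thesis by (simp add: bij_def finite_UNIV_inj_surj)
qed

lemma quad_additive_char2:
  fixes B :: "'a::field^'n^'n"
  assumes sym: "transpose B = B" and two: "(2::'a) = 0"
  shows "bform B (u + v) (u + v) = bform B u u + bform B v v"
proof -
  have "bform B (u + v) (u + v) = bform B u u + bform B v v + 2 * bform B u v"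
    using bform_sym[OF sym, of u v] by (simp add: bform_add_left bform_add_right algebra_simps)
  then show ?thesis using two by simp
qed

text \<open>In characteristic 2 a symmetric form whose quadratic form vanishes is alternating,
  and alternating forms in odd dimension are degenerate.\<close>
lemma anisotropic_vector_char2:
  fixes B :: "'a::field^3^3"
  assumes sym: "transpose B = B" and inv: "invertible B" and two: "(2::'a) = 0"
  shows "\<exists>y. bform B y y \<noteq> 0"
proof (rule ccontr)
  assume "\<not> (\<exists>y. bform B y y \<noteq> 0)"
  then have "B$k$k = 0" for k
    using bform_axis_left[of B k "axis k 1"] by (simp add: matrix_vector_mult_def axis_def of_bool_def[symmetric])
  then have "det B = 2 * (B$1$2 * B$2$3 * B$1$3)"
    unfolding det_3 using symmetric_entry[OF sym, of 2 1] symmetric_entry[OF sym, of 3 1]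
      symmetric_entry[OF sym, of 3 2]
    by (simp add: algebra_simps)
  then have "det B = 0" using two by simp
  then show False using inv invertible_det_nz by blast
qed

text \<open>Characteristic 2: the square root of Q is a nonzero linear functional, so the
  isotropic vectors form a plane with q^2 elements.\<close>
lemma card_conic_char2:
  fixes B :: "'a::{field,finite}^3^3"
  assumes sym: "transpose B = B" and inv: "invertible B" and two: "(2::'a) = 0"
  shows "card {y. bform B y y = 0} = CARD('a)^2"
proof -
  define sqrt where "sqrt = inv (\<lambda>x::'a. x * x)"
  have bij: "bij (\<lambda>x::'a. x * x)" by (rule squaring_bij_char2[OF two])
  have sqrt_sq: "sqrt z * sqrt z = z" for z
    unfolding sqrt_def using bij_inv_eq_iff[OF bij] by metis
  have sqrt_unique: "w * w = z \<Longrightarrow> sqrt z = w" for w z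
    unfolding sqrt_def using bij_inv_eq_iff[OF bij] by metis
  define l where "l y = sqrt (bform B y y)" for y
  have add: "l (u + v) = l u + l v" for u v
  proof -
    have "(l u + l v) * (l u + l v) = l u * l u + l v * l v + 2 * (l u * l v)"
      by (simp add: algebra_simps)
    also have "\<dots> = bform B (u + v) (u + v)"
      using two quad_additive_char2[OF sym two] by (simp add: l_def sqrt_sq)
    finally show ?thesis unfolding l_def by (rule sqrt_unique)
  qed
  have hom: "l (c *s u) = c * l u" for c u
    unfolding l_def quad_smult by (rule sqrt_unique) (simp add: sqrt_sq power2_eq_square algebra_simps)
  obtain y0 where "bform B y0 y0 \<noteq> 0" using anisotropic_vector_char2[OF sym inv two] by blast
  then have nz: "l y0 \<noteq> 0" using sqrt_sq[of "bform B y0 y0"] by (auto simp: l_def)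
  have "{y. bform B y y = 0} = {y. l y = 0}"
    using sqrt_sq sqrt_unique[of 0 0] by (auto simp: l_def) metis
  then show ?thesis using card_level_set_linear_3[OF add hom nz] by simp
qed

lemma card_conic:
  fixes B :: "'a::{field,finite}^3^3"
  assumes sym: "transpose B = B" and inv: "invertible B"
  shows "card {y. bform B y y = 0} = CARD('a)^2"
  using card_conic_odd_char[OF sym inv] card_conic_char2[OF sym inv] by blast

text \<open>The conic has q + 1 points: the q^2 - 1 nonzero isotropic vectors fall into classes
  of size q - 1.\<close>
lemma card_isotropic_reps:
  fixes xs :: "('a::{field,finite}^3) list" and B :: "'a^3^3"
  assumes pr: "proj_reps xs" and sym: "transpose B = B" and inv: "invertible B"
  shows "card {i. i < length xs \<and> bform B (xs!i) (xs!i) = 0} = CARD('a) + 1"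
proof (rule card_reps_via_nonzero[OF pr])
  show "(bform B (c *s x) (c *s x) = 0) = (bform B x x = 0)" if "c \<noteq> 0" for c x
    using that by (simp add: quad_smult)
  have "{x. x \<noteq> 0 \<and> bform B x x = 0} = {y. bform B y y = 0} - {0}" by auto
  then have "card {x. x \<noteq> 0 \<and> bform B x x = 0} = CARD('a)^2 - 1"
    using card_conic[OF sym inv] by (simp add: bform_def)
  also have "\<dots> = (CARD('a) - 1) * (CARD('a) + 1)" by (simp add: power2_eq_square algebra_simps)
  finally show "card {x. x \<noteq> 0 \<and> bform B x x = 0} = (CARD('a) - 1) * (CARD('a) + 1)" .
qed

text \<open>For an isotropic x \<noteq> 0, the points not orthogonal to x number q^2; among them
  the isotropic ones correspond to the q^2 - q isotropic vectors off the tangent plane,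
  i.e. q points, and the remaining q^2 - q are anisotropic.\<close>
lemma card_neighbour_reps:
  fixes xs :: "('a::{field,finite}^3) list" and B :: "'a^3^3"
  assumes pr: "proj_reps xs" and sym: "transpose B = B" and inv: "invertible B"
    and x: "x \<noteq> 0" "bform B x x = 0"
  shows "card {j. j < length xs \<and> bform B x (xs!j) \<noteq> 0 \<and> bform B (xs!j) (xs!j) = 0} = CARD('a)"
    and "card {j. j < length xs \<and> bform B x (xs!j) \<noteq> 0 \<and> bform B (xs!j) (xs!j) \<noteq> 0}
      = CARD('a)^2 - CARD('a)"
proof -
  let ?q = "CARD('a)"
  define C where "C = {y. bform B y y = 0}"
  define T where "T = {y. bform B x y = 0}"
  have scale_inv: "bform B x (c *s y) \<noteq> 0 \<longleftrightarrow> bform B x y \<noteq> 0"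
      "bform B (c *s y) (c *s y) = 0 \<longleftrightarrow> bform B y y = 0" if "c \<noteq> 0" for c y
    using that by (simp_all add: bform_smult_left bform_smult_right)
  have "{y. y \<noteq> 0 \<and> bform B x y \<noteq> 0} = UNIV - T" by (auto simp: T_def bform_def)
  then have "card {y. y \<noteq> 0 \<and> bform B x y \<noteq> 0} = ?q^3 - ?q^2"
    using card_bform_level[OF sym inv x(1), of 0] by (simp add: T_def card_Diff_subset)
  also have "\<dots> = (?q - 1) * ?q^2" by (simp add: power_numeral_reduce algebra_simps)
  finally have all: "card {j. j < length xs \<and> bform B x (xs!j) \<noteq> 0} = ?q^2"
    using scale_inv by (intro card_reps_via_nonzero[OF pr]) simp_all
  have "{y. y \<noteq> 0 \<and> (bform B x y \<noteq> 0 \<and> bform B y y = 0)} = C - C \<inter> T"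
    by (auto simp: C_def T_def bform_def)
  then have "card {y. y \<noteq> 0 \<and> (bform B x y \<noteq> 0 \<and> bform B y y = 0)} = ?q^2 - ?q"
    using card_conic[OF sym inv] card_isotropic_orthogonal[OF sym inv x]
    by (simp add: C_def T_def card_Diff_subset Collect_conj_eq)
  also have "\<dots> = (?q - 1) * ?q" by (simp add: power2_eq_square algebra_simps)
  finally show nonlooped: "card {j. j < length xs \<and> bform B x (xs!j) \<noteq> 0 \<and> bform B (xs!j) (xs!j) = 0} = ?q"
    using scale_inv by (intro card_reps_via_nonzero[OF pr]) simp_all
  let ?A = "{j. j < length xs \<and> bform B x (xs!j) \<noteq> 0}"
  let ?N = "{j. j < length xs \<and> bform B x (xs!j) \<noteq> 0 \<and> bform B (xs!j) (xs!j) = 0}"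
  have "{j. j < length xs \<and> bform B x (xs!j) \<noteq> 0 \<and> bform B (xs!j) (xs!j) \<noteq> 0} = ?A - ?N"
    by auto
  also have "card (?A - ?N) = card ?A - card ?N" by (rule card_Diff_subset) auto
  finally show "card {j. j < length xs \<and> bform B x (xs!j) \<noteq> 0 \<and> bform B (xs!j) (xs!j) \<noteq> 0}
      = ?q^2 - ?q"
    using all nonlooped by simp
qed

theorem mainTheorem17:
  fixes xs :: "('a::{field,finite} ^ 3) list" and B :: "'a ^ 3 ^ 3"
  assumes "proj_reps xs"
    and "transpose B = B"
    and "invertible B"
  shows "card {i. i < length xs \<and> \<not> lg_loop (gram_entry xs B) i} = CARD('a) + 1
       \<and> (\<forall>i < length xs. \<not> lg_loop (gram_entry xs B) i \<longrightarrow>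
            card {j. j < length xs \<and> lg_edge (gram_entry xs B) i j \<and> \<not> lg_loop (gram_entry xs B) j} = CARD('a)
          \<and> card {j. j < length xs \<and> lg_edge (gram_entry xs B) i j \<and> lg_loop (gram_entry xs B) j}
              = CARD('a) ^ 2 - CARD('a))"
proof -
  have loop_iff: "lg_loop (gram_entry xs B) i \<longleftrightarrow> bform B (xs!i) (xs!i) \<noteq> 0" for i
    by (simp add: lg_loop_def gram_entry_bform)
  have edge_iff: "lg_edge (gram_entry xs B) i j \<longleftrightarrow> bform B (xs!i) (xs!j) \<noteq> 0"
    if "\<not> lg_loop (gram_entry xs B) i" for i j
    using that by (auto simp: lg_edge_def loop_iff gram_entry_bform)
  have nonzero: "xs!i \<noteq> 0" if "i < length xs" for i
    using assms(1) that unfolding proj_reps_def by blast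
  show ?thesis
    using card_isotropic_reps[OF assms] card_neighbour_reps[OF assms nonzero]
    by (simp add: loop_iff edge_iff)
qed

end
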